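(* Let $(X_i)_{i\in\mathbb N}$ be a countable family of independent $\{0,1\}$-valued random variables and let $X=\sum_i X_i$ with $\mathbb E(X)<\infty$. Then for all integers $k\ge 2$, $$\mathbb E(X^k)\le \mathbb E(X^{k-1})\cdot\big(k-1+\mathbb E(X)\big).$$ *)

theory Defs
  imports "HOL-Probability.Probability"
begin
end

theory Submission
  imports Defs
begin

(* Write S = \<Sum>i x_i and S_i = S - x_i, and let m = k - 1. Since x_i \<in> {0,1},
   S^k = \<Sum>i x_i (S_i + 1)^m \<le> \<Sum>i x_i S_i^m + m S^m.  As x_i is independent of S_i,
   E(x_i S_i^m) = E(x_i) E(S_i^m) \<le> E(x_i) E(S^m), and summing over i gives the claim. *)

lemma power_Suc_add_one_le:
  fixes y :: "'a :: linordered_nonzero_semiring"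
  assumes "0 \<le> y"
  shows "(y + 1) ^ Suc m \<le> y ^ Suc m + of_nat (Suc m) * (y + 1) ^ m"
proof (induction m)
  case 0
  then show ?case by simp
next
  case (Suc m)
  have "(y + 1) ^ Suc (Suc m) = (y + 1) * (y + 1) ^ Suc m" by simp
  also have "\<dots> \<le> (y + 1) * (y ^ Suc m + of_nat (Suc m) * (y + 1) ^ m)"
    using Suc assms by (intro mult_left_mono) simp_all
  also have "\<dots> = y ^ Suc (Suc m) + y ^ Suc m + of_nat (Suc m) * (y + 1) ^ Suc m"
    by (simp add: algebra_simps)
  also have "\<dots> \<le> y ^ Suc (Suc m) + (y + 1) ^ Suc m + of_nat (Suc m) * (y + 1) ^ Suc m"
    using assms by (intro add_mono order_refl power_mono add_increasing2[OF zero_le_one]) simp_all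
  also have "\<dots> = y ^ Suc (Suc m) + of_nat (Suc (Suc m)) * (y + 1) ^ Suc m"
    by (simp add: algebra_simps)
  finally show ?case .
qed

lemma suminf_ennreal_split_term:
  fixes f :: "nat \<Rightarrow> ennreal"
  shows "(\<Sum>j. f j) = f i + (\<Sum>j. if j = i then 0 else f j)"
proof -
  have "(\<Sum>j. f j) = (\<Sum>j. (if j = i then f i else 0) + (if j = i then 0 else f j))"
    by (intro suminf_cong) auto
  also have "\<dots> = (\<Sum>j. if j = i then f i else 0) + (\<Sum>j. if j = i then 0 else f j)"
    by (rule suminf_add[symmetric]) auto
  also have "(\<Sum>j. if j = i then f i else 0) = f i"
    by (subst suminf_finite[of "{i}"]) auto
  finally show ?thesis .
qed

lemma power_suminf_zero_one_le:
  fixes x :: "nat \<Rightarrow> ennreal"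
  assumes zero_one: "\<And>i. x i \<in> {0, 1}"
  shows "(\<Sum>i. x i) ^ Suc (Suc n)
    \<le> (\<Sum>i. x i * (\<Sum>j. if j = i then 0 else x j) ^ Suc n) + of_nat (Suc n) * (\<Sum>i. x i) ^ Suc n"
proof -
  let ?S = "\<Sum>i. x i"
  have term_le: "x i * ?S ^ Suc n
      \<le> x i * (\<Sum>j. if j = i then 0 else x j) ^ Suc n + of_nat (Suc n) * (x i * ?S ^ n)" for i
    using zero_one[of i] power_Suc_add_one_le[of "\<Sum>j. if j = i then 0 else x j" n]
    by (auto simp: suminf_ennreal_split_term[of x i] add.commute)
  have "?S ^ Suc (Suc n) = (\<Sum>i. x i * ?S ^ Suc n)"
    by (simp add: ennreal_suminf_cmult mult.commute)
  also have "\<dots> \<le> (\<Sum>i. x i * (\<Sum>j. if j = i then 0 else x j) ^ Suc n + of_nat (Suc n) * (x i * ?S ^ n))"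
    by (intro suminf_le term_le) auto
  also have "\<dots> = (\<Sum>i. x i * (\<Sum>j. if j = i then 0 else x j) ^ Suc n)
      + (\<Sum>i. of_nat (Suc n) * (x i * ?S ^ n))"
    by (rule suminf_add[symmetric]) auto
  also have "(\<Sum>i. of_nat (Suc n) * (x i * ?S ^ n)) = of_nat (Suc n) * ?S ^ Suc n"
    by (simp add: ennreal_suminf_cmult mult.commute mult.left_commute)
  finally show ?thesis .
qed

lemma (in prob_space) indep_var_nn_integral:
  fixes X Y :: "'a \<Rightarrow> ennreal"
  assumes "indep_var borel X borel Y"
  shows "(\<integral>\<^sup>+\<omega>. X \<omega> * Y \<omega> \<partial>M) = (\<integral>\<^sup>+\<omega>. X \<omega> \<partial>M) * (\<integral>\<^sup>+\<omega>. Y \<omega> \<partial>M)"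
proof -
  have borel: "case_bool borel borel = (\<lambda>_. borel)"
    by (simp add: fun_eq_iff split: bool.split)
  have "indep_vars (\<lambda>_. borel) (case_bool X Y) UNIV"
    using assms unfolding indep_var_def borel .
  then have "(\<integral>\<^sup>+\<omega>. (\<Prod>b\<in>UNIV. case_bool X Y b \<omega>) \<partial>M) = (\<Prod>b\<in>UNIV. \<integral>\<^sup>+\<omega>. case_bool X Y b \<omega> \<partial>M)"
    by (intro indep_vars_nn_integral) auto
  then show ?thesis
    by (simp add: UNIV_bool mult.commute)
qed

lemma (in prob_space) indep_var_component_rest:
  assumes "indep_vars M' X I" "i \<in> I"
    and "f \<in> measurable (M' i) N" "g \<in> measurable (Pi\<^sub>M (I - {i}) M') N"
  shows "indep_var N (\<lambda>\<omega>. f (X i \<omega>)) N (\<lambda>\<omega>. g (restrict (\<lambda>j. X j \<omega>) (I - {i})))"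
proof -
  have "(\<lambda>v. f (v i)) \<in> measurable (Pi\<^sub>M {i} M') N"
    using assms(3) by measurable
  then have "indep_var N ((\<lambda>v. f (v i)) \<circ> (\<lambda>\<omega>. restrict (\<lambda>j. X j \<omega>) {i}))
      N (g \<circ> (\<lambda>\<omega>. restrict (\<lambda>j. X j \<omega>) (I - {i})))"
    using assms by (intro indep_var_compose[OF indep_var_restrict]) auto
  then show ?thesis
    by (simp add: comp_def)
qed

lemma (in prob_space) nn_integral_suminf_zero_one_power_le:
  fixes x :: "nat \<Rightarrow> 'a \<Rightarrow> ennreal"
  assumes indep: "indep_vars (\<lambda>_. borel) x UNIV"
    and zero_one: "\<And>i \<omega>. \<omega> \<in> space M \<Longrightarrow> x i \<omega> \<in> {0, 1}"
  shows "(\<integral>\<^sup>+\<omega>. (\<Sum>i. x i \<omega>) ^ Suc (Suc n) \<partial>M)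
    \<le> (\<integral>\<^sup>+\<omega>. (\<Sum>i. x i \<omega>) ^ Suc n \<partial>M) * (of_nat (Suc n) + (\<integral>\<^sup>+\<omega>. (\<Sum>i. x i \<omega>) \<partial>M))"
proof -
  define S where "S \<omega> = (\<Sum>i. x i \<omega>)" for \<omega>
  define R where "R i \<omega> = (\<Sum>j. if j = i then 0 else x j \<omega>)" for i \<omega>
  have [measurable]: "x i \<in> borel_measurable M" for i
    using indep by (auto simp: indep_vars_def)
  have [measurable]: "S \<in> borel_measurable M" "R i \<in> borel_measurable M" for i
    unfolding S_def R_def by measurable
  have R_le_S: "R i \<omega> \<le> S \<omega>" for i \<omega>
    unfolding S_def R_def suminf_ennreal_split_term[of "\<lambda>j. x j \<omega>" i] by simp
  have product_le: "(\<integral>\<^sup>+\<omega>. x i \<omega> * R i \<omega> ^ Suc n \<partial>M)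
      \<le> (\<integral>\<^sup>+\<omega>. x i \<omega> \<partial>M) * (\<integral>\<^sup>+\<omega>. S \<omega> ^ Suc n \<partial>M)" for i
  proof -
    have "(\<lambda>v. if j = i then 0 else v j)
        \<in> borel_measurable (Pi\<^sub>M (UNIV - {i}) (\<lambda>_. borel :: ennreal measure))" for j
      by (cases "j = i") auto
    then have "(\<lambda>v. (\<Sum>j. if j = i then 0 else v j) ^ Suc n)
        \<in> borel_measurable (Pi\<^sub>M (UNIV - {i}) (\<lambda>_. borel :: ennreal measure))"
      by measurable
    from indep_var_component_rest[OF indep _ measurable_ident_sets[OF refl] this]
    have "indep_var borel (x i) borel (\<lambda>\<omega>. R i \<omega> ^ Suc n)"
      by (simp add: R_def cong: if_cong)
    then have "(\<integral>\<^sup>+\<omega>. x i \<omega> * R i \<omega> ^ Suc n \<partial>M) = (\<integral>\<^sup>+\<omega>. x i \<omega> \<partial>M) * (\<integral>\<^sup>+\<omega>. R i \<omega> ^ Suc n \<partial>M)"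
      by (rule indep_var_nn_integral)
    also have "\<dots> \<le> (\<integral>\<^sup>+\<omega>. x i \<omega> \<partial>M) * (\<integral>\<^sup>+\<omega>. S \<omega> ^ Suc n \<partial>M)"
      by (intro mult_left_mono nn_integral_mono power_mono R_le_S) auto
    finally show ?thesis .
  qed
  have "(\<integral>\<^sup>+\<omega>. S \<omega> ^ Suc (Suc n) \<partial>M)
      \<le> (\<integral>\<^sup>+\<omega>. (\<Sum>i. x i \<omega> * R i \<omega> ^ Suc n) + of_nat (Suc n) * S \<omega> ^ Suc n \<partial>M)"
    unfolding S_def R_def using zero_one by (intro nn_integral_mono power_suminf_zero_one_le) auto
  also have "\<dots> = (\<Sum>i. \<integral>\<^sup>+\<omega>. x i \<omega> * R i \<omega> ^ Suc n \<partial>M) + of_nat (Suc n) * (\<integral>\<^sup>+\<omega>. S \<omega> ^ Suc n \<partial>M)"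
    by (simp add: nn_integral_add nn_integral_cmult nn_integral_suminf)
  also have "\<dots> \<le> (\<Sum>i. (\<integral>\<^sup>+\<omega>. x i \<omega> \<partial>M) * (\<integral>\<^sup>+\<omega>. S \<omega> ^ Suc n \<partial>M)) + of_nat (Suc n) * (\<integral>\<^sup>+\<omega>. S \<omega> ^ Suc n \<partial>M)"
    by (intro add_mono suminf_le product_le) auto
  also have "\<dots> = (\<integral>\<^sup>+\<omega>. S \<omega> ^ Suc n \<partial>M) * (of_nat (Suc n) + (\<integral>\<^sup>+\<omega>. S \<omega> \<partial>M))"
    by (simp add: S_def nn_integral_suminf ennreal_suminf_cmult algebra_simps)
  finally show ?thesis
    unfolding S_def .
qed

theorem lemma3p2:
  fixes M :: "'a measure" and Xs :: "nat \<Rightarrow> 'a \<Rightarrow> real" and k :: nat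
  assumes "prob_space M"
    and "prob_space.indep_vars M (\<lambda>_. borel) Xs UNIV"
    and "\<And>i \<omega>. \<omega> \<in> space M \<Longrightarrow> Xs i \<omega> \<in> {0, 1}"
    and "(\<integral>\<^sup>+ \<omega>. (\<Sum>i. ennreal (Xs i \<omega>)) \<partial>M) < \<infinity>"
    and "k \<ge> 2"
  shows "(\<integral>\<^sup>+ \<omega>. (\<Sum>i. ennreal (Xs i \<omega>)) ^ k \<partial>M)
         \<le> (\<integral>\<^sup>+ \<omega>. (\<Sum>i. ennreal (Xs i \<omega>)) ^ (k - 1) \<partial>M)
            * (of_nat (k - 1) + (\<integral>\<^sup>+ \<omega>. (\<Sum>i. ennreal (Xs i \<omega>)) \<partial>M))"
proof -
  interpret prob_space M by fact
  obtain n where k: "k = Suc (Suc n)"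
    using \<open>k \<ge> 2\<close> by (metis add_2_eq_Suc le_Suc_ex)
  have "indep_vars (\<lambda>_. borel) (\<lambda>i \<omega>. ennreal (Xs i \<omega>)) UNIV"
    using assms(2) by (rule indep_vars_compose2) simp
  moreover have "\<And>i \<omega>. \<omega> \<in> space M \<Longrightarrow> ennreal (Xs i \<omega>) \<in> {0, 1}"
    using assms(3) by (metis ennreal_0 ennreal_1 insert_iff singletonD)
  ultimately show ?thesis
    unfolding k by (simp only: diff_Suc_1 nn_integral_suminf_zero_one_power_le)
qed

end
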